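(* For every $\delta>0$ there exist $n\ge1$, a pool $\mathcal D=\{(p_i,t_i)\}_{i=1}^n$ with $p_i\in[0,1]$, $t_i>0$, and a budget $T>0$, such that the greedy backward selection strategy based on the usefulness values $u_i=p_i/t_i$ (defined in the context) outputs an ensemble $S$ with majority-voting accuracy $q(S)\le 1/2+\delta$, while there is an index set $\mathcal L\subseteq\{1,\dots,n\}$ with $\sum_{i\in\mathcal L}t_i\le T$ and $q(\mathcal L)\ge 1-\delta$; i.e., its error (optimal constrained accuracy minus output accuracy) can be arbitrarily close to $1/2$.
   Context: A pool consists of candidate members $i=1,\dots,n$, each with accuracy $p_i\in[0,1]$ and cost $t_i>0$; a budget $T>0$ is given; the usefulness of member $i$ is $u_i=p_i/t_i$. For a nonempty index set $\mathcal L$ with $|\mathcal L|=\ell$, the (majority voting) accuracy is $q(\mathcal L)=\sum_{k=\lfloor \ell/2\rfloor+1}^{\ell}\sum_{\mathcal I\subseteq\mathcal L,|\mathcal I|=k}\prod_{i\in\mathcal I}p_i\prod_{j\in\mathcal L\setminus\mathcal I}(1-p_j)$. Greedy backward selection by usefulness: start with $S=\{1,\dots,n\}$; while $\sum_{i\in S}t_i>T$ and $|S|>1$, remove from $S$ a member with smallest usefulness $u_i$; afterwards, while $|S|>1$ and removing a member of smallest usefulness strictly increases $q(S)$, remove it; output $S$. *)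

theory Defs
  imports Complex_Main
begin

definition usefulness :: "(nat \<Rightarrow> real) \<Rightarrow> (nat \<Rightarrow> real) \<Rightarrow> nat \<Rightarrow> real" where
  "usefulness p t i = p i / t i"

definition mv_acc :: "(nat \<Rightarrow> real) \<Rightarrow> nat set \<Rightarrow> real" where
  "mv_acc p L = (\<Sum>k = card L div 2 + 1 .. card L.
      \<Sum>I\<in>{I. I \<subseteq> L \<and> card I = k}. (\<Prod>i\<in>I. p i) * (\<Prod>j\<in>L - I. 1 - p j))"

definition min_useful :: "(nat \<Rightarrow> real) \<Rightarrow> (nat \<Rightarrow> real) \<Rightarrow> nat set \<Rightarrow> nat \<Rightarrow> bool" where
  "min_useful p t S i \<longleftrightarrow> i \<in> S \<and> (\<forall>j\<in>S. usefulness p t i \<le> usefulness p t j)"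

text \<open>Phase 1 (budget phase): phase1 p t T S S' means that the loop started in state S
  can terminate in state S' (for some tie-breaking).\<close>
inductive phase1 :: "(nat \<Rightarrow> real) \<Rightarrow> (nat \<Rightarrow> real) \<Rightarrow> real \<Rightarrow> nat set \<Rightarrow> nat set \<Rightarrow> bool"
  for p t T where
  p1_stop: "\<not> (sum t S > T \<and> card S > 1) \<Longrightarrow> phase1 p t T S S"
| p1_step: "sum t S > T \<Longrightarrow> card S > 1 \<Longrightarrow> min_useful p t S i \<Longrightarrow>
            phase1 p t T (S - {i}) S' \<Longrightarrow> phase1 p t T S S'"

text \<open>To cover every tie-breaking rule, the loop may stop
  whenever |S| <= 1 or some smallest-usefulness member's removal does not strictly
  increase q, and it may continue by removing any smallest-usefulness member
  whose removal strictly increases q.\<close>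
inductive phase2 :: "(nat \<Rightarrow> real) \<Rightarrow> (nat \<Rightarrow> real) \<Rightarrow> nat set \<Rightarrow> nat set \<Rightarrow> bool"
  for p t where
  p2_stop: "card S \<le> 1 \<or> (\<exists>i. min_useful p t S i \<and> \<not> mv_acc p (S - {i}) > mv_acc p S)
            \<Longrightarrow> phase2 p t S S"
| p2_step: "card S > 1 \<Longrightarrow> min_useful p t S i \<Longrightarrow> mv_acc p (S - {i}) > mv_acc p S \<Longrightarrow>
            phase2 p t (S - {i}) S' \<Longrightarrow> phase2 p t S S'"

definition greedy_output :: "nat \<Rightarrow> (nat \<Rightarrow> real) \<Rightarrow> (nat \<Rightarrow> real) \<Rightarrow> real \<Rightarrow> nat set \<Rightarrow> bool" where
  "greedy_output n p t T S \<longleftrightarrow> (\<exists>S1. phase1 p t T {1..n} S1 \<and> phase2 p t S1 S)"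

end

theory Submission
  imports Defs
begin

text \<open>A pool of two members already defeats the greedy strategy: a perfect but expensive
  member (accuracy 1, cost 1) and a coin-flipping cheap one (accuracy 1/2, cost 1/4).
  With budget 1 the cheap member is the more useful one, so the budget phase discards
  the perfect member and the output is the coin flip, of accuracy 1/2, although the
  perfect member alone fits the budget and has accuracy 1.\<close>

lemma mv_acc_singleton: "mv_acc p {i} = p i"
proof -
  have "{I. I \<subseteq> {i} \<and> card I = 1} = {{i}}"
    by (auto simp: subset_singleton_iff)
  then show ?thesis
    unfolding mv_acc_def by simp
qed

lemma phase1_singleton: "phase1 p t T {i} S \<longleftrightarrow> S = {i}"
proof
  show "phase1 p t T {i} S \<Longrightarrow> S = {i}"
    by (erule phase1.cases) auto
  show "S = {i} \<Longrightarrow> phase1 p t T {i} S"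
    by (auto intro: p1_stop)
qed

lemma phase2_singleton: "phase2 p t {i} S \<longleftrightarrow> S = {i}"
proof
  show "phase2 p t {i} S \<Longrightarrow> S = {i}"
    by (erule phase2.cases) auto
  show "S = {i} \<Longrightarrow> phase2 p t {i} S"
    by (auto intro: p2_stop)
qed

lemma min_useful_pair_iff:
  assumes "usefulness p t a < usefulness p t b"
  shows "min_useful p t {a, b} i \<longleftrightarrow> i = a"
  using assms unfolding min_useful_def by auto

lemma phase1_pair_iff:
  assumes over_budget: "t a + t b > T"
    and less_useful: "usefulness p t a < usefulness p t b"
  shows "phase1 p t T {a, b} S \<longleftrightarrow> S = {b}"
proof -
  from less_useful have "a \<noteq> b" by auto
  then have pair: "card {a, b} > 1" "sum t {a, b} > T" "{a, b} - {a} = {b}"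
    using over_budget by auto
  show ?thesis
  proof
    assume "phase1 p t T {a, b} S"
    then show "S = {b}"
    proof cases
      case p1_stop
      with pair show ?thesis by simp
    next
      case (p1_step i)
      then show ?thesis
        using min_useful_pair_iff[OF less_useful] pair(3) phase1_singleton by simp
    qed
  next
    assume "S = {b}"
    then show "phase1 p t T {a, b} S"
      using p1_step[OF pair(2,1)] pair(3) min_useful_pair_iff[OF less_useful] phase1_singleton
      by metis
  qed
qed

lemma greedy_output_pair_iff:
  assumes "t 1 + t 2 > T" and "usefulness p t 1 < usefulness p t 2"
  shows "greedy_output 2 p t T S \<longleftrightarrow> S = {2}"
proof -
  have "{1..2} = {1, 2::nat}" by auto
  then show ?thesis
    unfolding greedy_output_def
    using phase1_pair_iff[OF assms] phase2_singleton by auto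
qed

theorem proposition3:
  fixes \<delta> :: real
  assumes "\<delta> > 0"
  shows "\<exists>(n::nat) (p::nat \<Rightarrow> real) (t::nat \<Rightarrow> real) (T::real).
           n \<ge> 1 \<and> (\<forall>i\<in>{1..n}. 0 \<le> p i \<and> p i \<le> 1 \<and> t i > 0) \<and> T > 0 \<and>
           (\<exists>S. greedy_output n p t T S) \<and>
           (\<forall>S. greedy_output n p t T S \<longrightarrow> mv_acc p S \<le> 1/2 + \<delta>) \<and>
           (\<exists>L. L \<subseteq> {1..n} \<and> L \<noteq> {} \<and> sum t L \<le> T \<and> mv_acc p L \<ge> 1 - \<delta>)"
proof -
  define p :: "nat \<Rightarrow> real" where "p i = (if i = 1 then 1 else 1/2)" for i
  define t :: "nat \<Rightarrow> real" where "t i = (if i = 1 then 1 else 1/4)" for i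
  have greedy_output_iff: "greedy_output 2 p t 1 S \<longleftrightarrow> S = {2}" for S
    by (rule greedy_output_pair_iff) (simp_all add: p_def t_def usefulness_def)
  show ?thesis
  proof (intro exI conjI)
    show "(2::nat) \<ge> 1"
      by simp
    show "\<forall>i\<in>{1..2}. 0 \<le> p i \<and> p i \<le> 1 \<and> t i > 0"
      by (simp add: p_def t_def)
    show "(1::real) > 0"
      by simp
    show "greedy_output 2 p t 1 {2}"
      using greedy_output_iff by blast
    show "\<forall>S. greedy_output 2 p t 1 S \<longrightarrow> mv_acc p S \<le> 1/2 + \<delta>"
      using greedy_output_iff assms by (simp add: mv_acc_singleton p_def)
    show "{1} \<subseteq> {1..2::nat}" and "{1::nat} \<noteq> {}" and "sum t {1} \<le> 1"
      by (simp_all add: t_def)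
    show "mv_acc p {1} \<ge> 1 - \<delta>"
      using assms by (simp add: mv_acc_singleton p_def)
  qed
qed

end
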